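(* Let $N$ be a society, $\nabla$ an ES basic fusion operator with representing basic assignment $\Phi\mapsto\succeq_\Phi$, and $D$ an $N$-coalition. The following are equivalent: (i) $D$ is a decisive $N$-coalition with respect to $\nabla$; (ii) for every $N$-profile $\Phi$ and all $E,E'\in\mathcal E$ with $|[\![B(E)]\!]|\le2$, if $B(\nabla(E_i,E))\wedge B(E')\vdash\bot$ for all $i\in D$ then $B(\nabla(\Phi,E))\wedge B(E')\vdash\bot$; (iii) for every $N$-profile $\Phi$ and all interpretations $w,w'$, if $w\succ_{E_i}w'$ for all $i\in D$ then $w\succ_\Phi w'$.
   Context: Setting: epistemic space $(\mathcal E,B,\mathcal L_{\mathcal P})$ ($\mathcal E$ nonempty, $B:\mathcal E\to$ propositional formulas over finite $\mathcal P$, image modulo equivalence exactly the consistent formulas; $\mathcal W_{\mathcal P}$ valuations, $[\![\phi]\!]$ models); agents: well-ordered set $\mathcal S$; society: nonempty finite $N\subseteq\mathcal S$; $N$-profile $\Phi:N\to\mathcal E$, $E_i=\Phi(i)$, identified with $E_i$ if $N=\{i\}$; profiles on $\{i_1<\dots<i_n\}$, $\{j_1<\dots<j_m\}$ equivalent if $n=m$ and entries coincide position-wise. ES basic fusion operator: a map $\nabla(\Phi,E)\in\mathcal E$ with (ESF1) $B(\nabla(\Phi,E))\vdash B(E)$; (ESF2) equivalent profiles and $B(E)\equiv B(E')$ give equivalent $B(\nabla)$; (ESF3) if $B(E)\equiv B(E')\wedge B(E'')$ then $B(\nabla(\Phi,E'))\wedge B(E'')\vdash B(\nabla(\Phi,E))$;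 (ESF4) if moreover $B(\nabla(\Phi,E'))\wedge B(E'')\nvdash\bot$ then $B(\nabla(\Phi,E))\vdash B(\nabla(\Phi,E'))\wedge B(E'')$. Representing basic assignment: the unique $\Phi\mapsto\succeq_\Phi$ (total preorders on $\mathcal W_{\mathcal P}$, $\succ$ strict part, equal on equivalent profiles) with $[\![B(\nabla(\Phi,E))]\!]=\max([\![B(E)]\!],\succeq_\Phi)$. An $N$-coalition is a subset $D\subseteq N$; $D$ is decisive for $E$ against $E'$ if for every $N$-profile $\Phi$ with $B(\nabla(E_i,E))\wedge B(E')\vdash\bot$ for all $i\in D$ and $\bigwedge_{i\in D}B(\nabla(E_i,E))\nvdash\bot$ (empty conjunction is $\top$), we have $B(\nabla(\Phi,E))\wedge B(E')\vdash\bot$; $D$ is a decisive $N$-coalition if this holds for all $E,E'$. *)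

theory Defs
  imports Main
begin

datatype 'p form = Atom 'p | FBot | FTop | FNeg "'p form"
  | FAnd "'p form" "'p form" | FOr "'p form" "'p form" | FImp "'p form" "'p form"

type_synonym 'p world = "'p set"

fun holds :: "'p world \<Rightarrow> 'p form \<Rightarrow> bool" where
  "holds w (Atom p) = (p \<in> w)"
| "holds w FBot = False"
| "holds w FTop = True"
| "holds w (FNeg f) = (\<not> holds w f)"
| "holds w (FAnd f g) = (holds w f \<and> holds w g)"
| "holds w (FOr f g) = (holds w f \<or> holds w g)"
| "holds w (FImp f g) = (holds w f \<longrightarrow> holds w g)"

definition models :: "'p form \<Rightarrow> 'p world set" where
  "models f = {w. holds w f}"

definition entails :: "'p form \<Rightarrow> 'p form \<Rightarrow> bool" where
  "entails f g \<longleftrightarrow> models f \<subseteq> models g"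

definition fequiv :: "'p form \<Rightarrow> 'p form \<Rightarrow> bool" where
  "fequiv f g \<longleftrightarrow> entails f g \<and> entails g f"

definition inconsistent :: "'p form \<Rightarrow> bool" where
  "inconsistent f \<longleftrightarrow> entails f FBot"

definition epistemic_space :: "('e \<Rightarrow> 'p form) \<Rightarrow> bool" where
  "epistemic_space B \<longleftrightarrow>
     (\<forall>e. \<not> inconsistent (B e)) \<and>
     (\<forall>f. \<not> inconsistent f \<longrightarrow> (\<exists>e. fequiv (B e) f))"

text \<open>Agents form a well-ordered type 's. A society is a finite nonempty set of
agents; an N-profile is a function 's => 'e of which only the values on N matter.\<close>
definition society :: "'s set \<Rightarrow> bool" where
  "society N \<longleftrightarrow> finite N \<and> N \<noteq> {}"

definition profile_equiv :: "'s::wellorder set \<Rightarrow> ('s \<Rightarrow> 'e) \<Rightarrow> 's set \<Rightarrow> ('s \<Rightarrow> 'e) \<Rightarrow> bool" where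
  "profile_equiv N \<Phi> M \<Psi> \<longleftrightarrow>
     map \<Phi> (sorted_list_of_set N) = map \<Psi> (sorted_list_of_set M)"

text \<open>A fusion operator: nabla N Phi E is the result of fusing the N-profile Phi
under integrity constraint E. The singleton profile E_i is nabla {i} Phi.\<close>
definition ES_basic_fusion ::
  "('e \<Rightarrow> 'p form) \<Rightarrow> ('s::wellorder set \<Rightarrow> ('s \<Rightarrow> 'e) \<Rightarrow> 'e \<Rightarrow> 'e) \<Rightarrow> bool" where
  "ES_basic_fusion B nabla \<longleftrightarrow>
     (\<forall>N \<Phi> E. society N \<longrightarrow> entails (B (nabla N \<Phi> E)) (B E)) \<and>
     (\<forall>N \<Phi> M \<Psi> E E'. society N \<longrightarrow> society M \<longrightarrow> profile_equiv N \<Phi> M \<Psi> \<longrightarrow>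
        fequiv (B E) (B E') \<longrightarrow> fequiv (B (nabla N \<Phi> E)) (B (nabla M \<Psi> E'))) \<and>
     (\<forall>N \<Phi> E E' E''. society N \<longrightarrow> fequiv (B E) (FAnd (B E') (B E'')) \<longrightarrow>
        entails (FAnd (B (nabla N \<Phi> E')) (B E'')) (B (nabla N \<Phi> E))) \<and>
     (\<forall>N \<Phi> E E' E''. society N \<longrightarrow> fequiv (B E) (FAnd (B E') (B E'')) \<longrightarrow>
        \<not> inconsistent (FAnd (B (nabla N \<Phi> E')) (B E'')) \<longrightarrow>
        entails (B (nabla N \<Phi> E)) (FAnd (B (nabla N \<Phi> E')) (B E'')))"

definition total_preorder_on_worlds :: "('p world \<Rightarrow> 'p world \<Rightarrow> bool) \<Rightarrow> bool" where
  "total_preorder_on_worlds r \<longleftrightarrow>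
     (\<forall>w. r w w) \<and> (\<forall>u v w. r u v \<longrightarrow> r v w \<longrightarrow> r u w) \<and> (\<forall>u v. r u v \<or> r v u)"

definition strict :: "('a \<Rightarrow> 'a \<Rightarrow> bool) \<Rightarrow> 'a \<Rightarrow> 'a \<Rightarrow> bool" where
  "strict r w w' \<longleftrightarrow> r w w' \<and> \<not> r w' w"

definition maxset :: "'a set \<Rightarrow> ('a \<Rightarrow> 'a \<Rightarrow> bool) \<Rightarrow> 'a set" where
  "maxset S r = {w \<in> S. \<forall>w' \<in> S. r w w'}"

text \<open>rep N Phi is the total preorder assigned to the N-profile Phi (w >= w').\<close>
definition representing_basic_assignment ::
  "('e \<Rightarrow> 'p form) \<Rightarrow> ('s::wellorder set \<Rightarrow> ('s \<Rightarrow> 'e) \<Rightarrow> 'e \<Rightarrow> 'e)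
   \<Rightarrow> ('s set \<Rightarrow> ('s \<Rightarrow> 'e) \<Rightarrow> 'p world \<Rightarrow> 'p world \<Rightarrow> bool) \<Rightarrow> bool" where
  "representing_basic_assignment B nabla rep \<longleftrightarrow>
     (\<forall>N \<Phi>. society N \<longrightarrow> total_preorder_on_worlds (rep N \<Phi>)) \<and>
     (\<forall>N \<Phi> M \<Psi>. society N \<longrightarrow> society M \<longrightarrow> profile_equiv N \<Phi> M \<Psi> \<longrightarrow>
        rep N \<Phi> = rep M \<Psi>) \<and>
     (\<forall>N \<Phi> E. society N \<longrightarrow>
        models (B (nabla N \<Phi> E)) = maxset (models (B E)) (rep N \<Phi>))"

definition decisive_for ::
  "('e \<Rightarrow> 'p form) \<Rightarrow> ('s::wellorder set \<Rightarrow> ('s \<Rightarrow> 'e) \<Rightarrow> 'e \<Rightarrow> 'e)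
   \<Rightarrow> 's set \<Rightarrow> 's set \<Rightarrow> 'e \<Rightarrow> 'e \<Rightarrow> bool" where
  "decisive_for B nabla N D E E' \<longleftrightarrow>
     (\<forall>\<Phi>. (\<forall>i\<in>D. inconsistent (FAnd (B (nabla {i} \<Phi> E)) (B E'))) \<longrightarrow>
          (\<Inter>i\<in>D. models (B (nabla {i} \<Phi> E))) \<noteq> {} \<longrightarrow>
          inconsistent (FAnd (B (nabla N \<Phi> E)) (B E')))"

definition decisive_coalition ::
  "('e \<Rightarrow> 'p form) \<Rightarrow> ('s::wellorder set \<Rightarrow> ('s \<Rightarrow> 'e) \<Rightarrow> 'e \<Rightarrow> 'e)
   \<Rightarrow> 's set \<Rightarrow> 's set \<Rightarrow> bool" where
  "decisive_coalition B nabla N D \<longleftrightarrow> (\<forall>E E'. decisive_for B nabla N D E E')"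

end

theory Submission
  imports Defs
begin

text \<open>Only the representation of the operator by total preorders matters. Fusing under a
constraint with models \<open>{w, w'}\<close> and testing against \<open>{w'}\<close> detects exactly whether \<open>w\<close> is
strictly preferred to \<open>w'\<close>, so decisiveness, even restricted to constraints with at most two
models, forces the strict Pareto condition (iii). Conversely, under (iii) a model \<open>w'\<close> of
\<open>E'\<close> that is maximal for the society cannot be beaten, for every member of \<open>D\<close>, by a common
maximal element (giving (i)) or by the only other model of \<open>E\<close> (giving (ii)).\<close>

lemma inconsistent_FAnd_iff: "inconsistent (FAnd f g) \<longleftrightarrow> models f \<inter> models g = {}"
  by (auto simp: inconsistent_def entails_def models_def)

fun char_form :: "'p list \<Rightarrow> 'p world \<Rightarrow> 'p form" where
  "char_form [] w = FTop"
| "char_form (p # ps) w = FAnd (if p \<in> w then Atom p else FNeg (Atom p)) (char_form ps w)"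

lemma holds_char_form: "holds v (char_form ps w) \<longleftrightarrow> (\<forall>p\<in>set ps. p \<in> v \<longleftrightarrow> p \<in> w)"
  by (induction ps) auto

lemma models_char_form:
  assumes "set ps = (UNIV :: 'p set)"
  shows "models (char_form ps w) = {w}"
  using assms by (auto simp: models_def holds_char_form)

lemma definable_world_set:
  fixes S :: "('p::finite) world set"
  shows "\<exists>f. models f = S"
proof -
  obtain ps where ps: "set ps = (UNIV :: 'p set)" using finite_list[OF finite_UNIV] by blast
  obtain ws where ws: "set ws = S" using finite_list[of S] by auto
  have models_FOr: "models (FOr f g) = models f \<union> models g" for f g :: "'p form"
    by (auto simp: models_def)
  have "models (foldr (\<lambda>w f. FOr (char_form ps w) f) ws FBot) = set ws"
    by (induction ws) (simp_all add: models_FOr models_char_form[OF ps], simp add: models_def)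
  with ws show ?thesis by blast
qed

lemma epistemic_space_realises:
  fixes B :: "'e \<Rightarrow> ('p::finite) form"
  assumes "epistemic_space B" and "S \<noteq> {}"
  shows "\<exists>e. models (B e) = S"
proof -
  obtain f where f: "models f = S" using definable_world_set by blast
  with assms(2) have "\<not> inconsistent f" by (auto simp: inconsistent_def entails_def models_def)
  then obtain e where "fequiv (B e) f" using assms(1) by (auto simp: epistemic_space_def)
  with f show ?thesis by (auto simp: fequiv_def entails_def)
qed

lemma strict_irrefl: "\<not> strict r w w"
  by (simp add: strict_def)

lemma not_strict_above_maxset: "w' \<in> maxset S r \<Longrightarrow> w \<in> S \<Longrightarrow> \<not> strict r w w'"
  by (simp add: maxset_def strict_def)

lemma strict_if_maxset_notin_maxset:
  assumes "total_preorder_on_worlds r" "w \<in> maxset S r" "w' \<in> S" "w' \<notin> maxset S r"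
  shows "strict r w w'"
proof -
  from assms(3,4) obtain y where "y \<in> S" "\<not> r w' y" by (auto simp: maxset_def)
  with assms(1,2,3) show ?thesis
    unfolding total_preorder_on_worlds_def maxset_def strict_def by blast
qed

lemma notin_maxset_pair_iff_strict:
  assumes "total_preorder_on_worlds r"
  shows "w' \<notin> maxset {w, w'} r \<longleftrightarrow> strict r w w'"
  using assms unfolding total_preorder_on_worlds_def maxset_def strict_def by blast

lemma maxset_pair_strict:
  assumes "total_preorder_on_worlds r" "strict r w w'"
  shows "maxset {w, w'} r = {w}"
  using assms unfolding total_preorder_on_worlds_def maxset_def strict_def by blast

definition strict_Pareto :: "('s set \<Rightarrow> ('s \<Rightarrow> 'e) \<Rightarrow> 'w \<Rightarrow> 'w \<Rightarrow> bool) \<Rightarrow> 's set \<Rightarrow> 's set \<Rightarrow> bool"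
  where "strict_Pareto rep N D \<longleftrightarrow>
    (\<forall>\<Phi> w w'. (\<forall>i\<in>D. strict (rep {i} \<Phi>) w w') \<longrightarrow> strict (rep N \<Phi>) w w')"

lemma strict_ParetoD:
  "strict_Pareto rep N D \<Longrightarrow> (\<And>i. i \<in> D \<Longrightarrow> strict (rep {i} \<Phi>) w w') \<Longrightarrow> strict (rep N \<Phi>) w w'"
  by (simp add: strict_Pareto_def)

lemma strict_Pareto_coalition_nonempty: "strict_Pareto rep N D \<Longrightarrow> D \<noteq> {}"
  using strict_ParetoD[of rep N "{}"] strict_irrefl by fastforce

text \<open>The common weakening of (i) and (ii).\<close>

definition decisive_on_pairs ::
  "('e \<Rightarrow> 'p form) \<Rightarrow> ('s::wellorder set \<Rightarrow> ('s \<Rightarrow> 'e) \<Rightarrow> 'e \<Rightarrow> 'e) \<Rightarrow> 's set \<Rightarrow> 's set \<Rightarrow> bool"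
  where "decisive_on_pairs B nabla N D \<longleftrightarrow>
    (\<forall>E E'. card (models (B E)) \<le> 2 \<longrightarrow> decisive_for B nabla N D E E')"

lemma society_singleton: "society {i}"
  by (simp add: society_def)

context
  fixes B :: "'e \<Rightarrow> ('p::finite) form"
    and nabla :: "'s::wellorder set \<Rightarrow> ('s \<Rightarrow> 'e) \<Rightarrow> 'e \<Rightarrow> 'e"
    and rep :: "'s set \<Rightarrow> ('s \<Rightarrow> 'e) \<Rightarrow> 'p world \<Rightarrow> 'p world \<Rightarrow> bool"
  assumes rep: "representing_basic_assignment B nabla rep"
begin

lemma models_fusion: "society M \<Longrightarrow> models (B (nabla M \<Phi> E)) = maxset (models (B E)) (rep M \<Phi>)"
  using rep by (simp add: representing_basic_assignment_def)

lemma total_preorder_rep: "society M \<Longrightarrow> total_preorder_on_worlds (rep M \<Phi>)"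
  using rep by (simp add: representing_basic_assignment_def)

lemma models_fusion_singleton:
  "models (B (nabla {i} \<Phi> E)) = maxset (models (B E)) (rep {i} \<Phi>)"
  by (rule models_fusion[OF society_singleton])

lemma total_preorder_rep_singleton: "total_preorder_on_worlds (rep {i} \<Phi>)"
  by (rule total_preorder_rep[OF society_singleton])

lemma strict_Pareto_imp_decisive:
  assumes "society N" and pareto: "strict_Pareto rep N D"
  shows "decisive_coalition B nabla N D"
  unfolding decisive_coalition_def decisive_for_def
proof (intro allI impI)
  fix E E' \<Phi>
  assume excluded: "\<forall>i\<in>D. inconsistent (FAnd (B (nabla {i} \<Phi> E)) (B E'))"
    and common: "(\<Inter>i\<in>D. models (B (nabla {i} \<Phi> E))) \<noteq> {}"
  show "inconsistent (FAnd (B (nabla N \<Phi> E)) (B E'))"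
    unfolding inconsistent_FAnd_iff
  proof (rule ccontr)
    assume "models (B (nabla N \<Phi> E)) \<inter> models (B E') \<noteq> {}"
    then obtain w' where w'N: "w' \<in> maxset (models (B E)) (rep N \<Phi>)" and w'E': "w' \<in> models (B E')"
      using models_fusion[OF \<open>society N\<close>] by auto
    have w'E: "w' \<in> models (B E)" using w'N by (simp add: maxset_def)
    from common obtain w where w: "\<forall>i\<in>D. w \<in> maxset (models (B E)) (rep {i} \<Phi>)"
      by (auto simp: models_fusion_singleton)
    obtain i0 where "i0 \<in> D" using strict_Pareto_coalition_nonempty[OF pareto] by blast
    with w have wE: "w \<in> models (B E)" by (auto simp: maxset_def)
    have "strict (rep {i} \<Phi>) w w'" if "i \<in> D" for i
    proof (rule strict_if_maxset_notin_maxset[OF total_preorder_rep_singleton])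
      show "w \<in> maxset (models (B E)) (rep {i} \<Phi>)" using w that by blast
      show "w' \<notin> maxset (models (B E)) (rep {i} \<Phi>)"
        using excluded that w'E' by (auto simp: inconsistent_FAnd_iff models_fusion_singleton)
    qed (fact w'E)
    then have "strict (rep N \<Phi>) w w'" by (rule strict_ParetoD[OF pareto])
    with not_strict_above_maxset[OF w'N wE] show False by blast
  qed
qed

lemma strict_Pareto_imp_decisive_at_most_two_models:
  assumes "society N" and pareto: "strict_Pareto rep N D"
    and card: "card (models (B E)) \<le> 2"
    and excluded: "\<forall>i\<in>D. inconsistent (FAnd (B (nabla {i} \<Phi> E)) (B E'))"
  shows "inconsistent (FAnd (B (nabla N \<Phi> E)) (B E'))"
  unfolding inconsistent_FAnd_iff
proof (rule ccontr)
  assume "models (B (nabla N \<Phi> E)) \<inter> models (B E') \<noteq> {}"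
  then obtain w' where w'N: "w' \<in> maxset (models (B E)) (rep N \<Phi>)" and w'E': "w' \<in> models (B E')"
    using models_fusion[OF \<open>society N\<close>] by auto
  have w'E: "w' \<in> models (B E)" using w'N by (simp add: maxset_def)
  have w'_excluded: "w' \<notin> maxset (models (B E)) (rep {i} \<Phi>)" if "i \<in> D" for i
    using excluded that w'E' by (auto simp: inconsistent_FAnd_iff models_fusion_singleton)
  obtain i0 where "i0 \<in> D" using strict_Pareto_coalition_nonempty[OF pareto] by blast
  with w'_excluded w'E obtain y where y: "y \<in> models (B E)" "\<not> rep {i0} \<Phi> w' y"
    by (auto simp: maxset_def)
  have "rep {i0} \<Phi> w' w'"
    using total_preorder_rep_singleton by (simp add: total_preorder_on_worlds_def)
  with y have "y \<noteq> w'" by blast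
  with y(1) w'E have "{y, w'} \<subseteq> models (B E)" "card {y, w'} = 2" by auto
  with card have E: "models (B E) = {y, w'}"
    using card_seteq[OF finite] by metis
  have "strict (rep {i} \<Phi>) y w'" if "i \<in> D" for i
    using w'_excluded[OF that] notin_maxset_pair_iff_strict[OF total_preorder_rep_singleton]
    by (simp add: E)
  then have "strict (rep N \<Phi>) y w'" by (rule strict_ParetoD[OF pareto])
  with not_strict_above_maxset[OF w'N] y(1) show False by blast
qed

lemma decisive_on_pairs_imp_strict_Pareto:
  assumes "epistemic_space B" and "society N" and decisive: "decisive_on_pairs B nabla N D"
  shows "strict_Pareto rep N D"
  unfolding strict_Pareto_def
proof (intro allI impI)
  fix \<Phi> w w'
  assume strict_D: "\<forall>i\<in>D. strict (rep {i} \<Phi>) w w'"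
  obtain E where E: "models (B E) = {w, w'}"
    using epistemic_space_realises[OF assms(1), of "{w, w'}"] by auto
  obtain E' where E': "models (B E') = {w'}"
    using epistemic_space_realises[OF assms(1), of "{w'}"] by auto
  have winners: "models (B (nabla {i} \<Phi> E)) = {w}" if "i \<in> D" for i
  proof -
    have "strict (rep {i} \<Phi>) w w'" using strict_D that by blast
    with maxset_pair_strict[OF total_preorder_rep_singleton]
    have "maxset {w, w'} (rep {i} \<Phi>) = {w}" .
    then show ?thesis by (simp only: models_fusion_singleton E)
  qed
  have "card (models (B E)) \<le> 2" unfolding E by (rule card_insert_le_m1) simp_all
  with decisive have "decisive_for B nabla N D E E'" by (simp add: decisive_on_pairs_def)
  moreover have "\<forall>i\<in>D. inconsistent (FAnd (B (nabla {i} \<Phi> E)) (B E'))"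
  proof
    fix i assume "i \<in> D"
    with strict_D have "w \<noteq> w'" by (auto simp: strict_def)
    with winners[OF \<open>i \<in> D\<close>] E' show "inconsistent (FAnd (B (nabla {i} \<Phi> E)) (B E'))"
      by (simp add: inconsistent_FAnd_iff)
  qed
  moreover have "(\<Inter>i\<in>D. models (B (nabla {i} \<Phi> E))) \<noteq> {}" using winners by auto
  ultimately have "inconsistent (FAnd (B (nabla N \<Phi> E)) (B E'))"
    unfolding decisive_for_def by blast
  then have "w' \<notin> maxset {w, w'} (rep N \<Phi>)"
    unfolding inconsistent_FAnd_iff models_fusion[OF \<open>society N\<close>] E E' by blast
  with notin_maxset_pair_iff_strict[OF total_preorder_rep[OF \<open>society N\<close>]]
  show "strict (rep N \<Phi>) w w'" by blast
qed

end

theorem mainTheorem15: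
  fixes B :: "'e \<Rightarrow> ('p::finite) form"
    and nabla :: "'s::wellorder set \<Rightarrow> ('s \<Rightarrow> 'e) \<Rightarrow> 'e \<Rightarrow> 'e"
    and rep :: "'s set \<Rightarrow> ('s \<Rightarrow> 'e) \<Rightarrow> 'p world \<Rightarrow> 'p world \<Rightarrow> bool"
    and N D :: "'s set"
  assumes "epistemic_space B"
    and "society N"
    and "ES_basic_fusion B nabla"
    and "representing_basic_assignment B nabla rep"
    and "D \<subseteq> N"
  shows "(decisive_coalition B nabla N D
          \<longleftrightarrow> (\<forall>\<Phi> E E'. card (models (B E)) \<le> 2 \<longrightarrow>
                 (\<forall>i\<in>D. inconsistent (FAnd (B (nabla {i} \<Phi> E)) (B E'))) \<longrightarrow>
                 inconsistent (FAnd (B (nabla N \<Phi> E)) (B E'))))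
       \<and> (decisive_coalition B nabla N D
          \<longleftrightarrow> (\<forall>\<Phi> w w'. (\<forall>i\<in>D. strict (rep {i} \<Phi>) w w') \<longrightarrow> strict (rep N \<Phi>) w w'))"
proof -
  note rep = assms(4)
  have decisive_iff: "decisive_coalition B nabla N D \<longleftrightarrow> strict_Pareto rep N D"
  proof
    assume "decisive_coalition B nabla N D"
    then have "decisive_on_pairs B nabla N D"
      by (simp add: decisive_coalition_def decisive_on_pairs_def)
    then show "strict_Pareto rep N D" by (rule decisive_on_pairs_imp_strict_Pareto[OF rep assms(1,2)])
  qed (rule strict_Pareto_imp_decisive[OF rep assms(2)])
  have pairs_iff: "(\<forall>\<Phi> E E'. card (models (B E)) \<le> 2 \<longrightarrow>
                 (\<forall>i\<in>D. inconsistent (FAnd (B (nabla {i} \<Phi> E)) (B E'))) \<longrightarrow>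
                 inconsistent (FAnd (B (nabla N \<Phi> E)) (B E')))
      \<longleftrightarrow> strict_Pareto rep N D" (is "?pairs \<longleftrightarrow> _")
  proof
    assume ?pairs
    then have "decisive_on_pairs B nabla N D"
      by (simp add: decisive_on_pairs_def decisive_for_def)
    then show "strict_Pareto rep N D" by (rule decisive_on_pairs_imp_strict_Pareto[OF rep assms(1,2)])
  next
    assume "strict_Pareto rep N D"
    then show ?pairs
      by (intro allI impI) (rule strict_Pareto_imp_decisive_at_most_two_models[OF rep assms(2)])
  qed
  show ?thesis using decisive_iff pairs_iff by (simp only: strict_Pareto_def)
qed

end
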